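(* Let $M\ge 2$, $D,Q,K$ positive integers, and let $\varphi:\mathbb{R}^D\times R\to\mathbb{R}^K$, $(\bm{x},\rho)\mapsto\varphi(\bm{x};\rho)$, be a function on a parameter set $R$ such that for every $\bm{x}\in\mathbb{R}^D$ there exists $\rho\in R$ with $\varphi(\bm{x};\rho)\neq\bm{0}$. Consider networks $\mathcal{F}=\{F_i\}_{i=1}^M$ with $F_i(\bm{x}) = \bm{W}^i\varphi(\bm{x};\rho^i)$, parametrised by $\bm{W}^i\in\mathbb{R}^{Q\times K}$ and $\rho^i\in R$. Let $\mathcal{D}=\{(\bm{x}_n,\bm{y}_n)\}_{n=1}^N$ be a nonempty finite data set in $\mathbb{R}^D\times\mathbb{R}^Q$, $\overline{F}=\frac1M\sum_i F_i$, and $$E_\lambda(\mathcal{F},\mathcal{D}) = \frac{1}{N}\sum_{n=1}^N\Big(\frac{1}{M}\sum_{i=1}^M\|F_i(\bm{x}_n)-\bm{y}_n\|^2-\lambda\frac{1}{M}\sum_{i=1}^M\|F_i(\bm{x}_n)-\overline{F}(\bm{x}_n)\|^2\Big).$$ With infima over all parametrisations $(\bm{W}^i,\rho^i)_{i=1}^M$: (i) if $\lambda\le1$ then $\inf E_\lambda(\mathcal{F},\mathcal{D})\ge0$; (ii) if $\lambda>1$ then $\inf E_\lambda(\mathcal{F},\mathcal{D})=-\infty$. Moreover, if $\lambda>1$, then for all $Q_1,Q_2>0$ there exists a parametrisation with $E_\lambda(\mathcal{F},\mathcal{D})<-Q_1$, $\frac1N\sum_n\|\overline{F}(\bm{x}_n)-\bm{y}_n\|^2>Q_2$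 and $\frac1N\sum_n\frac1M\sum_i\|F_i(\bm{x}_n)-\bm{y}_n\|^2>Q_2$.
   Context: Networks of this form are called Modular Linear Top Layer Networks. $\|\cdot\|$ is the Euclidean norm. *)

theory Defs
  imports "HOL-Analysis.Analysis"
begin

text \<open>Parameters: W :: nat => Q x K matrix, rho :: nat => parameter, indices 0..M-1.
  Data set: nonempty list of pairs (x_n, y_n).\<close>

definition member_out ::
  "('d \<Rightarrow> 'r \<Rightarrow> real^'k) \<Rightarrow> (nat \<Rightarrow> real^'k^'q) \<Rightarrow> (nat \<Rightarrow> 'r) \<Rightarrow> nat \<Rightarrow> 'd \<Rightarrow> real^'q"
  where "member_out phi W rho i x = W i *v phi x (rho i)"

definition ens_mean ::
  "nat \<Rightarrow> ('d \<Rightarrow> 'r \<Rightarrow> real^'k) \<Rightarrow> (nat \<Rightarrow> real^'k^'q) \<Rightarrow> (nat \<Rightarrow> 'r) \<Rightarrow> 'd \<Rightarrow> real^'q"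
  where "ens_mean M phi W rho x = (1 / real M) *\<^sub>R (\<Sum>i<M. member_out phi W rho i x)"

definition E_lambda ::
  "real \<Rightarrow> nat \<Rightarrow> ('d \<Rightarrow> 'r \<Rightarrow> real^'k) \<Rightarrow> ('d \<times> (real^'q)) list \<Rightarrow> (nat \<Rightarrow> real^'k^'q) \<Rightarrow> (nat \<Rightarrow> 'r) \<Rightarrow> real"
  where "E_lambda lam M phi D W rho =
    (1 / real (length D)) * (\<Sum>(x, y) \<leftarrow> D.
       (1 / real M) * (\<Sum>i<M. (norm (member_out phi W rho i x - y))\<^sup>2)
       - lam * ((1 / real M) * (\<Sum>i<M. (norm (member_out phi W rho i x - ens_mean M phi W rho x))\<^sup>2)))"

definition ens_error ::
  "nat \<Rightarrow> ('d \<Rightarrow> 'r \<Rightarrow> real^'k) \<Rightarrow> ('d \<times> (real^'q)) list \<Rightarrow> (nat \<Rightarrow> real^'k^'q) \<Rightarrow> (nat \<Rightarrow> 'r) \<Rightarrow> real"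
  where "ens_error M phi D W rho =
    (1 / real (length D)) * (\<Sum>(x, y) \<leftarrow> D. (norm (ens_mean M phi W rho x - y))\<^sup>2)"

definition avg_member_error ::
  "nat \<Rightarrow> ('d \<Rightarrow> 'r \<Rightarrow> real^'k) \<Rightarrow> ('d \<times> (real^'q)) list \<Rightarrow> (nat \<Rightarrow> real^'k^'q) \<Rightarrow> (nat \<Rightarrow> 'r) \<Rightarrow> real"
  where "avg_member_error M phi D W rho =
    (1 / real (length D)) * (\<Sum>(x, y) \<leftarrow> D.
       (1 / real M) * (\<Sum>i<M. (norm (member_out phi W rho i x - y))\<^sup>2))"

end

theory Submission imports Defs begin

text \<open>Averaging the member losses splits them into the loss of the ensemble mean plus the
  diversity (the spread of the members around the mean), so that
  \<open>E\<^sub>\<lambda> = ens_error + (1 - \<lambda>) \<cdot> diversity\<close>. For \<open>\<lambda> \<le> 1\<close> both terms are nonnegative.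
  For \<open>\<lambda> > 1\<close> take all members to be multiples \<open>(s + d\<^sub>i) A\<close> of one matrix with the same
  feature map, where \<open>d = (t, -t, 0, \<dots>, 0)\<close>: the ensemble mean \<open>s A \<phi>\<close> does not depend on
  \<open>t\<close>, and \<open>s\<close> makes its error large, while the diversity grows like \<open>t\<^sup>2\<close> and drives
  \<open>E\<^sub>\<lambda>\<close> to \<open>-\<infinity>\<close>.\<close>

definition ens_diversity ::
  "nat \<Rightarrow> ('d \<Rightarrow> 'r \<Rightarrow> real^'k) \<Rightarrow> ('d \<times> (real^'q)) list \<Rightarrow> (nat \<Rightarrow> real^'k^'q) \<Rightarrow> (nat \<Rightarrow> 'r) \<Rightarrow> real"
  where "ens_diversity M phi D W rho =
    (1 / real (length D)) * (\<Sum>(x, y) \<leftarrow> D.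
       (1 / real M) * (\<Sum>i<M. (norm (member_out phi W rho i x - ens_mean M phi W rho x))\<^sup>2))"

lemma mean_sq_dist_eq_bias_plus_spread:
  fixes f :: "nat \<Rightarrow> 'a::real_inner"
  assumes "M > 0"
  defines "m \<equiv> (1 / real M) *\<^sub>R (\<Sum>i<M. f i)"
  shows "(1 / real M) * (\<Sum>i<M. (norm (f i - y))\<^sup>2)
       = (norm (m - y))\<^sup>2 + (1 / real M) * (\<Sum>i<M. (norm (f i - m))\<^sup>2)"
proof -
  have sum_f: "(\<Sum>i<M. f i) = real M *\<^sub>R m"
    using assms by (simp add: m_def)
  have expand: "(norm (f i - y))\<^sup>2 = (norm (f i - m))\<^sup>2 + 2 * inner (f i - m) (m - y) + (norm (m - y))\<^sup>2"
    for i
  proof -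
    have "f i - y = (f i - m) + (m - y)" by simp
    then show ?thesis
      by (metis power2_norm_eq_inner inner_add_left inner_add_right inner_commute mult_2 add.assoc)
  qed
  have cross: "(\<Sum>i<M. inner (f i - m) (m - y)) = 0"
    by (simp add: inner_sum_left[symmetric] sum_subtractf sum_f inner_diff_left)
  have "(\<Sum>i<M. (norm (f i - y))\<^sup>2)
      = (\<Sum>i<M. (norm (f i - m))\<^sup>2) + 2 * (\<Sum>i<M. inner (f i - m) (m - y)) + real M * (norm (m - y))\<^sup>2"
    by (simp add: expand sum.distrib sum_distrib_left)
  with cross assms show ?thesis by (simp add: field_simps)
qed

lemma avg_member_error_eq_ens_error_plus_diversity:
  assumes "M > 0"
  shows "avg_member_error M phi D W rho = ens_error M phi D W rho + ens_diversity M phi D W rho"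
proof -
  have "(1 / real M) * (\<Sum>i<M. (norm (member_out phi W rho i x - y))\<^sup>2)
      = (norm (ens_mean M phi W rho x - y))\<^sup>2
        + (1 / real M) * (\<Sum>i<M. (norm (member_out phi W rho i x - ens_mean M phi W rho x))\<^sup>2)"
    for x y
    unfolding ens_mean_def by (rule mean_sq_dist_eq_bias_plus_spread[OF assms])
  \<comment> \<open>The right-hand side contains an instance of the left-hand side (take \<open>y\<close> to be the
    mean), so this equation cannot be used as a simplification rule.\<close>
  then have "(\<lambda>(x, y). (1 / real M) * (\<Sum>i<M. (norm (member_out phi W rho i x - y))\<^sup>2))
      = (\<lambda>(x, y). (norm (ens_mean M phi W rho x - y))\<^sup>2
        + (1 / real M) * (\<Sum>i<M. (norm (member_out phi W rho i x - ens_mean M phi W rho x))\<^sup>2))"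
    by (intro ext) (unfold split_def)
  then show ?thesis
    unfolding avg_member_error_def ens_error_def ens_diversity_def
    by (simp only: split_def sum_list_addf distrib_left)
qed

lemma E_lambda_eq_ens_error_plus_diversity:
  assumes "M > 0"
  shows "E_lambda lam M phi D W rho = ens_error M phi D W rho + (1 - lam) * ens_diversity M phi D W rho"
proof -
  have "E_lambda lam M phi D W rho = avg_member_error M phi D W rho - lam * ens_diversity M phi D W rho"
    unfolding E_lambda_def avg_member_error_def ens_diversity_def split_def
    by (simp only: sum_list_subtractf sum_list_const_mult) (simp add: algebra_simps)
  then show ?thesis
    using avg_member_error_eq_ens_error_plus_diversity[OF assms] by (simp add: algebra_simps)
qed

lemma ens_error_nonneg: "ens_error M phi D W rho \<ge> 0"
  unfolding ens_error_def by (intro mult_nonneg_nonneg sum_list_nonneg) auto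

lemma ens_diversity_nonneg: "ens_diversity M phi D W rho \<ge> 0"
  unfolding ens_diversity_def by (intro mult_nonneg_nonneg sum_list_nonneg) (auto intro!: divide_nonneg_nonneg sum_nonneg)

lemma E_lambda_nonneg:
  assumes "M > 0" "lam \<le> 1"
  shows "E_lambda lam M phi D W rho \<ge> 0"
  using ens_error_nonneg[of M phi D W rho] ens_diversity_nonneg[of M phi D W rho] assms
  by (simp add: E_lambda_eq_ens_error_plus_diversity)

lemma list_mean_gt_of_member:
  fixes f :: "'a \<Rightarrow> real"
  assumes "z \<in> set xs" "\<And>z. z \<in> set xs \<Longrightarrow> f z \<ge> 0" "f z > real (length xs) * B"
  shows "(1 / real (length xs)) * (\<Sum>z \<leftarrow> xs. f z) > B"
proof -
  have "f z \<le> (\<Sum>z \<leftarrow> xs. f z)"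
    using assms(1,2) by (intro member_le_sum_list) auto
  moreover have "length xs > 0" using assms(1) by (cases xs) auto
  ultimately show ?thesis using assms(3) by (simp add: field_simps)
qed

lemma exists_scale_sq_dist_gt:
  fixes u y :: "'a::real_normed_vector"
  assumes "u \<noteq> 0"
  shows "\<exists>s. (norm (s *\<^sub>R u - y))\<^sup>2 > B"
proof -
  define s where "s = (norm y + sqrt \<bar>B\<bar> + 1) / norm u"
  have "norm (s *\<^sub>R u) = norm y + sqrt \<bar>B\<bar> + 1"
    using assms by (simp add: s_def)
  then have "norm (s *\<^sub>R u - y) \<ge> sqrt \<bar>B\<bar> + 1"
    using norm_triangle_ineq2[of "s *\<^sub>R u" y] by linarith
  then have "(sqrt \<bar>B\<bar>)\<^sup>2 < (norm (s *\<^sub>R u - y))\<^sup>2"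
    by (intro power_strict_mono) auto
  then show ?thesis by (intro exI[of _ s]) auto
qed

lemma const_rows_mult_nonzero:
  fixes v :: "real^'k"
  assumes "v \<noteq> 0"
  shows "((\<chi> j. v) :: real^'k^'q) *v v \<noteq> 0"
proof
  assume zero: "((\<chi> j. v) :: real^'k^'q) *v v = 0"
  have "(((\<chi> j. v) :: real^'k^'q) *v v) $ j = inner v v" for j
    by (simp add: matrix_vector_mult_def inner_vec_def)
  from this[of undefined] zero have "inner v v = 0" by simp
  with assms show False by simp
qed

definition dipole :: "real \<Rightarrow> nat \<Rightarrow> real"
  where "dipole t i = (if i = 0 then t else if i = 1 then - t else 0)"

lemma sum_dipole: "2 \<le> M \<Longrightarrow> (\<Sum>i<M. dipole t i) = 0"
  by (induction rule: dec_induct) (auto simp: dipole_def numeral_2_eq_2 lessThan_Suc)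

lemma sum_dipole_sq: "2 \<le> M \<Longrightarrow> (\<Sum>i<M. (dipole t i)\<^sup>2) = 2 * t\<^sup>2"
  by (induction rule: dec_induct) (auto simp: dipole_def numeral_2_eq_2 lessThan_Suc)

lemma member_out_scaled_copies:
  "member_out phi (\<lambda>i. c i *\<^sub>R A) (\<lambda>_. r) i x = c i *\<^sub>R (A *v phi x r)"
  by (simp add: member_out_def scaleR_matrix_vector_assoc)

lemma ens_mean_dipole:
  assumes "2 \<le> M"
  shows "ens_mean M phi (\<lambda>i. (s + dipole t i) *\<^sub>R A) (\<lambda>_. r) x = s *\<^sub>R (A *v phi x r)"
proof -
  have "(\<Sum>i<M. s + dipole t i) = real M * s"
    by (simp add: sum.distrib sum_dipole[OF assms])
  with assms show ?thesis
    by (simp add: ens_mean_def member_out_scaled_copies scaleR_sum_left[symmetric])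
qed

lemma ens_error_dipole:
  assumes "2 \<le> M"
  shows "ens_error M phi D (\<lambda>i. (s + dipole t i) *\<^sub>R A) (\<lambda>_. r)
       = (1 / real (length D)) * (\<Sum>(x, y) \<leftarrow> D. (norm (s *\<^sub>R (A *v phi x r) - y))\<^sup>2)"
  by (simp add: ens_error_def ens_mean_dipole[OF assms])

lemma ens_diversity_dipole:
  assumes "2 \<le> M"
  shows "ens_diversity M phi D (\<lambda>i. (s + dipole t i) *\<^sub>R A) (\<lambda>_. r)
       = t\<^sup>2 * ((1 / real (length D)) * (\<Sum>(x, y) \<leftarrow> D. 2 / real M * (norm (A *v phi x r))\<^sup>2))"
proof -
  define W where "W = (\<lambda>i. (s + dipole t i) *\<^sub>R A)"
  have "member_out phi W (\<lambda>_. r) i x - ens_mean M phi W (\<lambda>_. r) x = dipole t i *\<^sub>R (A *v phi x r)"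
    for i x
    unfolding W_def ens_mean_dipole[OF assms] member_out_scaled_copies by (simp add: algebra_simps)
  then have "(1 / real M) * (\<Sum>i<M. (norm (member_out phi W (\<lambda>_. r) i x - ens_mean M phi W (\<lambda>_. r) x))\<^sup>2)
      = t\<^sup>2 * (2 / real M * (norm (A *v phi x r))\<^sup>2)" for x
    by (simp add: power_mult_distrib sum_distrib_right[symmetric] sum_dipole_sq[OF assms])
  then show ?thesis
    unfolding W_def[symmetric] ens_diversity_def split_def
    by (simp only: sum_list_const_mult) (simp add: algebra_simps)
qed

lemma exists_param_E_lambda_below_with_errors_above:
  fixes phi :: "'d \<Rightarrow> 'r \<Rightarrow> real^'k" and D :: "('d \<times> (real^'q)) list"
  assumes M: "2 \<le> M" and lam: "lam > 1"
    and data: "(x0, y0) \<in> set D" and r: "r \<in> R" "phi x0 r \<noteq> 0"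
  shows "\<exists>(W :: nat \<Rightarrow> real^'k^'q) rho. (\<forall>i. rho i \<in> R) \<and> E_lambda lam M phi D W rho < B
           \<and> ens_error M phi D W rho > C \<and> avg_member_error M phi D W rho > C"
proof -
  define A :: "real^'k^'q" where "A = (\<chi> j. phi x0 r)"
  define a where "a x = A *v phi x r" for x
  define N where "N = real (length D)"
  have "a x0 \<noteq> 0"
    using const_rows_mult_nonzero[OF r(2)] by (simp add: a_def A_def)
  then obtain s where s: "(norm (s *\<^sub>R a x0 - y0))\<^sup>2 > N * C"
    using exists_scale_sq_dist_gt by blast
  define err where "err = (1 / N) * (\<Sum>(x, y) \<leftarrow> D. (norm (s *\<^sub>R a x - y))\<^sup>2)"
  define \<kappa> where "\<kappa> = (1 / N) * (\<Sum>(x, y) \<leftarrow> D. 2 / real M * (norm (a x))\<^sup>2)"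
  have err: "err > C"
    using list_mean_gt_of_member[OF data, of "\<lambda>(x, y). (norm (s *\<^sub>R a x - y))\<^sup>2" C] s
    by (force simp: err_def N_def)
  have \<kappa>: "\<kappa> > 0"
    using list_mean_gt_of_member[OF data, of "\<lambda>(x, y). 2 / real M * (norm (a x))\<^sup>2" 0] \<open>a x0 \<noteq> 0\<close> M
    by (force simp: \<kappa>_def N_def)
  define t where "t = sqrt ((\<bar>err - B\<bar> + 1) / ((lam - 1) * \<kappa>))"
  have t: "(lam - 1) * (t\<^sup>2 * \<kappa>) = \<bar>err - B\<bar> + 1"
    using lam \<kappa> by (simp add: t_def)
  define W where "W = (\<lambda>i. (s + dipole t i) *\<^sub>R A)"
  define rho :: "nat \<Rightarrow> 'r" where "rho = (\<lambda>_. r)"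
  have error: "ens_error M phi D W rho = err"
    unfolding W_def rho_def ens_error_dipole[OF M] err_def N_def a_def ..
  have diversity: "ens_diversity M phi D W rho = t\<^sup>2 * \<kappa>"
    unfolding W_def rho_def ens_diversity_dipole[OF M] \<kappa>_def N_def a_def ..
  have "E_lambda lam M phi D W rho = err - (lam - 1) * (t\<^sup>2 * \<kappa>)"
    using M by (simp add: E_lambda_eq_ens_error_plus_diversity error diversity algebra_simps)
  moreover have "avg_member_error M phi D W rho \<ge> err"
    using M ens_diversity_nonneg[of M phi D W rho]
    by (simp add: avg_member_error_eq_ens_error_plus_diversity error)
  ultimately show ?thesis
    using t err r(1) error by (intro exI[of _ W] exI[of _ rho]) (auto simp: rho_def)
qed

theorem theorem5:
  fixes M :: nat
    and phi :: "real^'d \<Rightarrow> 'r \<Rightarrow> real^'k"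
    and R :: "'r set"
    and D :: "((real^'d) \<times> (real^'q)) list"
  assumes "M \<ge> 2"
    and "\<forall>x. \<exists>\<rho>\<in>R. phi x \<rho> \<noteq> 0"
    and "D \<noteq> []"
  shows "(lam \<le> 1 \<longrightarrow>
            (INF (W, rho) \<in> {(W, rho). \<forall>i. rho i \<in> R}. ereal (E_lambda lam M phi D W rho)) \<ge> 0)
       \<and> (lam > 1 \<longrightarrow>
            (INF (W, rho) \<in> {(W, rho). \<forall>i. rho i \<in> R}. ereal (E_lambda lam M phi D W rho)) = -\<infinity>)
       \<and> (lam > 1 \<longrightarrow> (\<forall>Q1 Q2. Q1 > 0 \<longrightarrow> Q2 > 0 \<longrightarrow>
            (\<exists>W rho. (\<forall>i. rho i \<in> R) \<and> E_lambda lam M phi D W rho < - Q1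
                 \<and> ens_error M phi D W rho > Q2 \<and> avg_member_error M phi D W rho > Q2)))"
proof (intro conjI impI allI)
  obtain x0 y0 where data: "(x0, y0) \<in> set D"
    using assms(3) by (cases D) auto
  obtain r where r: "r \<in> R" "phi x0 r \<noteq> 0"
    using assms(2) by blast
  note large = exists_param_E_lambda_below_with_errors_above[where phi = phi, OF assms(1) _ data r]
  show "(INF (W, rho) \<in> {(W, rho). \<forall>i. rho i \<in> R}. ereal (E_lambda lam M phi D W rho)) \<ge> 0"
    if "lam \<le> 1"
    using E_lambda_nonneg[of M lam] assms(1) that by (auto intro!: INF_greatest)
  show "\<exists>W rho. (\<forall>i. rho i \<in> R) \<and> E_lambda lam M phi D W rho < - Q1
          \<and> ens_error M phi D W rho > Q2 \<and> avg_member_error M phi D W rho > Q2"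
    if "lam > 1" for Q1 Q2
    using large[OF that] by blast
  show "(INF (W, rho) \<in> {(W, rho). \<forall>i. rho i \<in> R}. ereal (E_lambda lam M phi D W rho)) = -\<infinity>"
    if lam: "lam > 1"
  proof (rule ereal_bot)
    fix B
    obtain W rho where "\<forall>i. rho i \<in> R" "E_lambda lam M phi D W rho < B"
      using large[OF lam, of B 0] by blast
    then show "(INF (W, rho) \<in> {(W, rho). \<forall>i. rho i \<in> R}. ereal (E_lambda lam M phi D W rho)) \<le> ereal B"
      by (intro INF_lower2[of "(W, rho)"]) auto
  qed
qed

end
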